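(* For all real $\alpha,\beta$ with $\beta\neq0$, every integer $n\ge0$ and every real $x>0$, \[ P_n^{(\alpha,\beta)}(x^{\beta})=(-1)^n x^{n-\alpha}e^{-x^{\beta}}\Big(\frac{d}{dx}\Big)^n\big(x^{\alpha}e^{x^{\beta}}\big), \qquad P_n^{(\alpha,\beta)}(x^{-\beta})=x^{\alpha+1}e^{-x^{-\beta}}\Big(\frac{d}{dx}\Big)^n\big(x^{n-1-\alpha}e^{x^{-\beta}}\big). \]
   Context: For real $\alpha,\beta$ with $\beta\neq0$, the polynomials $P_n^{(\alpha,\beta)}(x)$, $n\ge0$, are defined by $\sum_{n\ge0}P_n^{(\alpha,\beta)}(x)\frac{t^n}{n!}=(1-t)^{\alpha}\exp\big(x((1-t)^{\beta}-1)\big)$ (formal power series in $t$). Real powers $x^{\gamma}$ of $x>0$ are the usual positive real powers. *)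

theory Defs
  imports "HOL-Analysis.Analysis" "HOL-Computational_Algebra.Formal_Power_Series"
begin

definition one_minus_t_powr :: "real \<Rightarrow> real fps" where
  "one_minus_t_powr a = fps_binomial a oo (- fps_X)"

text \<open>Generating function (1-t)^alpha * exp(x((1-t)^beta - 1)); exp(x g) for g with zero
  constant term is the composition of the series exp(x t) with g.\<close>
definition P_gen :: "real \<Rightarrow> real \<Rightarrow> real \<Rightarrow> real fps" where
  "P_gen \<alpha> \<beta> x = one_minus_t_powr \<alpha> * (fps_exp x oo (one_minus_t_powr \<beta> - 1))"

definition P :: "nat \<Rightarrow> real \<Rightarrow> real \<Rightarrow> real \<Rightarrow> real" where
  "P n \<alpha> \<beta> x = fact n * fps_nth (P_gen \<alpha> \<beta> x) n"

end

theory Submission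
  imports Defs
begin

text \<open>Expanding the generating function in powers of \<open>x\<close> shows that \<open>P\<^sub>n(z)\<close> is a polynomial
  of degree at most \<open>n\<close> in \<open>z\<close> whose \<open>k\<close>-th coefficient is \<open>(-1)^n / k!\<close> times the \<open>k\<close>-th forward
  difference, with step \<open>\<beta>\<close> and base point \<open>\<alpha>\<close>, of the falling factorial of degree \<open>n\<close>.
  A discrete Leibniz rule turns this into the recurrence
  \<open>P\<^sub>n\<^sub>+\<^sub>1(z) = (n - \<alpha> - \<beta> z) P\<^sub>n(z) - \<beta> z P\<^sub>n'(z)\<close>, which is exactly what one differentiation
  of \<open>y^(\<alpha>-n) exp(z) P\<^sub>n(z)\<close> with \<open>z = y^\<beta>\<close> produces, since \<open>y dz/dy = \<beta> z\<close>; induction on \<open>n\<close>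
  gives the first formula. The second one is the first for the parameters \<open>(n - 1 - \<alpha>, -\<beta>)\<close>:
  reflecting the falling factorial shows that these parameters change \<open>P\<^sub>n\<close> only by the sign
  \<open>(-1)^n\<close>.\<close>

lemma fps_nth_one_minus_t_powr:
  "fps_nth (one_minus_t_powr a) n = (-1) ^ n * (a gchoose n)"
  by (simp add: one_minus_t_powr_def fps_compose_uminus')

lemma one_minus_t_powr_0 [simp]: "one_minus_t_powr 0 = 1"
  by (simp add: one_minus_t_powr_def fps_eq_iff fps_compose_uminus')

lemma one_minus_t_powr_add:
  "one_minus_t_powr a * one_minus_t_powr b = one_minus_t_powr (a + b)"
  unfolding one_minus_t_powr_def
  by (simp add: fps_binomial_add_mult fps_compose_mult_distrib)

lemma one_minus_t_powr_power:
  "one_minus_t_powr a ^ j = one_minus_t_powr (real j * a)"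
  by (induction j) (simp_all add: one_minus_t_powr_add algebra_simps)

lemma one_minus_t_powr_minus_1_power:
  "(one_minus_t_powr b - 1) ^ k =
     (\<Sum>j\<le>k. fps_const (real (k choose j) * (-1) ^ (k - j)) * one_minus_t_powr (real j * b))"
proof -
  have "(one_minus_t_powr b - 1) ^ k = (one_minus_t_powr b + (-1)) ^ k"
    by simp
  also have "\<dots> = (\<Sum>j\<le>k. of_nat (k choose j) * one_minus_t_powr b ^ j * (-1) ^ (k - j))"
    by (rule binomial_ring)
  finally show ?thesis
    by (simp add: one_minus_t_powr_power fps_of_nat fps_const_neg [symmetric]
        fps_const_power [symmetric] fps_const_mult [symmetric] mult_ac
        del: fps_const_neg fps_const_power fps_const_mult)
qed

lemma fps_nth_mult_power_eq_0:
  fixes A B :: "'a::comm_semiring_1 fps"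
  assumes "fps_nth B 0 = 0" and "n < k"
  shows "fps_nth (A * B ^ k) n = 0"
  unfolding fps_mult_nth
  using assms startsby_zero_power_prefix[OF assms(1)] by (intro sum.neutral) auto

lemma fps_nth_mult_compose_exp:
  fixes A B :: "'a::field_char_0 fps"
  assumes B0: "fps_nth B 0 = 0"
  shows "fps_nth (A * (fps_exp c oo B)) n = (\<Sum>k\<le>n. c ^ k / fact k * fps_nth (A * B ^ k) n)"
proof -
  have compose_nth: "fps_nth (fps_exp c oo B) m = (\<Sum>k\<le>n. c ^ k / fact k * fps_nth (B ^ k) m)"
    if "m \<le> n" for m
  proof -
    have "fps_nth (fps_exp c oo B) m = (\<Sum>k\<le>m. c ^ k / fact k * fps_nth (B ^ k) m)"
      by (simp add: fps_compose_nth atMost_atLeast0)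
    also have "\<dots> = (\<Sum>k\<le>n. c ^ k / fact k * fps_nth (B ^ k) m)"
      using that startsby_zero_power_prefix[OF B0] by (intro sum.mono_neutral_left) auto
    finally show ?thesis .
  qed
  have "fps_nth (A * (fps_exp c oo B)) n
      = (\<Sum>i\<le>n. fps_nth A i * (\<Sum>k\<le>n. c ^ k / fact k * fps_nth (B ^ k) (n - i)))"
    by (simp add: fps_mult_nth compose_nth atMost_atLeast0)
  also have "\<dots> = (\<Sum>k\<le>n. c ^ k / fact k * (\<Sum>i\<le>n. fps_nth A i * fps_nth (B ^ k) (n - i)))"
    unfolding sum_distrib_left by (subst sum.swap) (simp add: mult.left_commute)
  finally show ?thesis
    by (simp add: fps_mult_nth atMost_atLeast0)
qed

definition ffact :: "nat \<Rightarrow> real \<Rightarrow> real" where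
  "ffact n x = (\<Prod>i<n. x - real i)"

definition fwd_diff :: "real \<Rightarrow> (real \<Rightarrow> real) \<Rightarrow> nat \<Rightarrow> real \<Rightarrow> real" where
  "fwd_diff h f k x = (\<Sum>j\<le>k. real (k choose j) * (-1) ^ (k - j) * f (x + h * real j))"

lemma ffact_eq_fact_gchoose: "ffact n x = fact n * (x gchoose n)"
  by (simp add: ffact_def gbinomial_mult_fact atLeast0LessThan)

lemma ffact_Suc: "ffact (Suc n) = (\<lambda>x. (x - real n) * ffact n x)"
  by (simp add: fun_eq_iff ffact_def)

lemma ffact_reflect: "ffact n (real n - 1 - x) = (-1) ^ n * ffact n x"
  by (simp add: ffact_eq_fact_gchoose gbinomial_negated_upper[of x n] algebra_simps)

lemma fwd_diff_0 [simp]: "fwd_diff h f 0 x = f x"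
  by (simp add: fwd_diff_def)

lemma fwd_diff_ffact_reflect:
  "fwd_diff (- h) (ffact n) k (real n - 1 - x) = (-1) ^ n * fwd_diff h (ffact n) k x"
proof -
  have "ffact n (real n - 1 - x + - h * real j) = (-1) ^ n * ffact n (x + h * real j)" for j
    using ffact_reflect [of n "x + h * real j"] by (simp add: algebra_simps)
  then show ?thesis
    by (simp add: fwd_diff_def sum_distrib_left mult_ac)
qed

text \<open>The discrete Leibniz rule for a linear factor: write \<open>x + h j - c\<close> as
  \<open>(x - c + h m) - h (m - j)\<close> and absorb \<open>m - j\<close> into \<open>m choose j\<close>.\<close>
lemma fwd_diff_Suc_linear_mult:
  "fwd_diff h (\<lambda>y. (y - c) * f y) (Suc k) x =
     (x - c + h * real (Suc k)) * fwd_diff h f (Suc k) x + h * real (Suc k) * fwd_diff h f k x"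
proof -
  define m where "m = Suc k"
  define g where "g j = f (x + h * real j)" for j
  have absorb: "(\<Sum>j\<le>m. real (m choose j) * (-1) ^ (m - j) * real (m - j) * g j)
      = - real m * fwd_diff h f k x"
  proof -
    have "(\<Sum>j\<le>m. real (m choose j) * (-1) ^ (m - j) * real (m - j) * g j)
        = (\<Sum>j\<le>k. real (m choose j) * (-1) ^ (m - j) * real (m - j) * g j)"
      by (simp add: m_def)
    also have "\<dots> = (\<Sum>j\<le>k. - real m * (real (k choose j) * (-1) ^ (k - j) * g j))"
    proof (intro sum.cong refl)
      fix j assume "j \<in> {..k}"
      then have sign: "(-1::real) ^ (m - j) = - ((-1) ^ (k - j))"
        by (simp add: m_def Suc_diff_le)
      have "real (m - j) * real (m choose j) = real m * real (k choose j)"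
        using binomial_absorb_comp[of m j] unfolding m_def by (metis diff_Suc_1 of_nat_mult)
      then show "real (m choose j) * (-1) ^ (m - j) * real (m - j) * g j
          = - real m * (real (k choose j) * (-1) ^ (k - j) * g j)"
        by (simp add: sign algebra_simps)
    qed
    finally show ?thesis
      by (simp add: fwd_diff_def g_def sum_distrib_left)
  qed
  have "fwd_diff h (\<lambda>y. (y - c) * f y) m x
      = (\<Sum>j\<le>m. real (m choose j) * (-1) ^ (m - j) *
            ((x - c + h * real m) * g j - h * real (m - j) * g j))"
    unfolding fwd_diff_def g_def by (intro sum.cong refl) (auto simp: of_nat_diff algebra_simps)
  also have "\<dots> = (x - c + h * real m) * fwd_diff h f m x
      - h * (\<Sum>j\<le>m. real (m choose j) * (-1) ^ (m - j) * real (m - j) * g j)"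
    unfolding fwd_diff_def g_def sum_distrib_left sum_subtractf [symmetric]
    by (intro sum.cong refl) (simp add: algebra_simps)
  also have "\<dots> = (x - c + h * real m) * fwd_diff h f m x + h * real m * fwd_diff h f k x"
    unfolding absorb by (simp add: algebra_simps)
  finally show ?thesis
    unfolding m_def .
qed

lemma fps_nth_one_minus_t_powr_mult_power:
  "fps_nth (one_minus_t_powr a * (one_minus_t_powr b - 1) ^ k) n =
     (-1) ^ n * fwd_diff b (ffact n) k a / fact n"
proof -
  have summand: "one_minus_t_powr a * (fps_const c * one_minus_t_powr (real j * b))
      = fps_const c * one_minus_t_powr (a + b * real j)" for c j
    by (metis mult.commute mult.left_commute one_minus_t_powr_add)
  have "one_minus_t_powr a * (one_minus_t_powr b - 1) ^ k =
      (\<Sum>j\<le>k. fps_const (real (k choose j) * (-1) ^ (k - j)) * one_minus_t_powr (a + b * real j))"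
    unfolding one_minus_t_powr_minus_1_power sum_distrib_left summand ..
  then show ?thesis
    by (simp add: fps_sum_nth fps_nth_one_minus_t_powr fwd_diff_def ffact_eq_fact_gchoose
        sum_distrib_left sum_divide_distrib mult_ac)
qed

definition P_coeff :: "nat \<Rightarrow> real \<Rightarrow> real \<Rightarrow> nat \<Rightarrow> real" where
  "P_coeff n a b k = (-1) ^ n * fwd_diff b (ffact n) k a / fact k"

lemma P_eq_sum: "P n a b z = (\<Sum>k\<le>n. P_coeff n a b k * z ^ k)"
proof -
  have "fps_nth (one_minus_t_powr b - 1) 0 = 0"
    by (simp add: fps_nth_one_minus_t_powr)
  then show ?thesis
    unfolding P_def P_gen_def P_coeff_def
    by (simp add: fps_nth_mult_compose_exp fps_nth_one_minus_t_powr_mult_power sum_distrib_left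
        field_simps)
qed

lemma P_coeff_eq_0: "n < k \<Longrightarrow> P_coeff n a b k = 0"
  using fps_nth_mult_power_eq_0[of "one_minus_t_powr b - 1" n k "one_minus_t_powr a"]
  by (simp add: P_coeff_def fps_nth_one_minus_t_powr fps_nth_one_minus_t_powr_mult_power)

lemma P_coeff_Suc_0: "P_coeff (Suc n) a b 0 = (real n - a) * P_coeff n a b 0"
  by (simp add: P_coeff_def ffact_Suc algebra_simps)

lemma P_coeff_Suc_Suc:
  "P_coeff (Suc n) a b (Suc k) =
     (real n - a - b * real (Suc k)) * P_coeff n a b (Suc k) - b * P_coeff n a b k"
  unfolding P_coeff_def ffact_Suc fwd_diff_Suc_linear_mult
  by (simp add: divide_simps) (simp add: algebra_simps)

lemma has_real_derivative_P:
  "(P n a b has_real_derivative (\<Sum>k\<le>n. P_coeff n a b k * real k * z ^ (k - 1))) (at z)"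
proof -
  have "P n a b = (\<lambda>z. \<Sum>k\<le>n. P_coeff n a b k * z ^ k)"
    by (simp add: fun_eq_iff P_eq_sum)
  then show ?thesis
    by (auto intro!: derivative_eq_intros simp: mult_ac)
qed

lemma deriv_P: "deriv (P n a b) z = (\<Sum>k\<le>n. P_coeff n a b k * real k * z ^ (k - 1))"
  by (rule DERIV_imp_deriv [OF has_real_derivative_P])

lemma P_Suc:
  "P (Suc n) a b z = (real n - a - b * z) * P n a b z - b * z * deriv (P n a b) z"
proof -
  let ?c = "P_coeff n a b"
  have z_deriv: "z * deriv (P n a b) z = (\<Sum>k\<le>n. ?c k * real k * z ^ k)"
    unfolding deriv_P sum_distrib_left
    by (intro sum.cong refl) (cases "k = 0"; simp add: power_eq_if)
  have shift: "(real n - a) * ?c 0 + (\<Sum>k\<le>n. (real n - a - b * real (Suc k)) * ?c (Suc k) * z ^ Suc k)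
      = (\<Sum>k\<le>n. (real n - a - b * real k) * ?c k * z ^ k)"
  proof -
    have "(\<Sum>k\<le>Suc n. (real n - a - b * real k) * ?c k * z ^ k)
        = (real n - a) * ?c 0 + (\<Sum>k\<le>n. (real n - a - b * real (Suc k)) * ?c (Suc k) * z ^ Suc k)"
      by (subst sum.atMost_Suc_shift) simp
    then show ?thesis
      by (simp add: P_coeff_eq_0)
  qed
  have "P (Suc n) a b z = P_coeff (Suc n) a b 0 + (\<Sum>k\<le>n. P_coeff (Suc n) a b (Suc k) * z ^ Suc k)"
    unfolding P_eq_sum by (subst sum.atMost_Suc_shift) simp
  also have "\<dots> = (real n - a) * ?c 0 + (\<Sum>k\<le>n. (real n - a - b * real (Suc k)) * ?c (Suc k) * z ^ Suc k
      - b * z * (?c k * z ^ k))"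
    by (simp add: P_coeff_Suc_0 P_coeff_Suc_Suc algebra_simps)
  also have "\<dots> = (\<Sum>k\<le>n. (real n - a - b * real k) * ?c k * z ^ k) - b * z * (\<Sum>k\<le>n. ?c k * z ^ k)"
    unfolding shift [symmetric] by (simp add: sum_subtractf sum_distrib_left)
  also have "\<dots> = (real n - a - b * z) * P n a b z - b * z * deriv (P n a b) z"
    unfolding P_eq_sum [of n a b z] mult.assoc [of b z] z_deriv
    by (simp add: sum_distrib_left sum_subtractf sum.distrib algebra_simps)
  finally show ?thesis .
qed

lemma has_real_derivative_powr_exp_P:
  assumes "y > 0"
  shows "((\<lambda>y. y powr (a - real n) * exp (y powr b) * P n a b (y powr b)) has_real_derivative
           - (y powr (a - real (Suc n)) * exp (y powr b) * P (Suc n) a b (y powr b))) (at y)"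
proof -
  define z where "z = y powr b"
  define p where "p = y powr (a - real (Suc n))"
  have powr_a_n: "y powr (a - real n) = p * y" "y powr (a - real n - 1) = p"
    using assms powr_mult_base [of y "a - real (Suc n)"] by (simp_all add: p_def algebra_simps)
  have powr_b: "y powr (b - 1) = z / y"
    using assms by (simp add: z_def powr_diff)
  let ?D = "(a - real n) * y powr (a - real n - 1) * exp (y powr b) * P n a b (y powr b)
      + y powr (a - real n) * (exp (y powr b) * (b * y powr (b - 1))) * P n a b (y powr b)
      + y powr (a - real n) * exp (y powr b) * (deriv (P n a b) (y powr b) * (b * y powr (b - 1)))"
  have "((\<lambda>y. y powr (a - real n) * exp (y powr b) * P n a b (y powr b)) has_real_derivative ?D) (at y)"
    using assms
    by (auto intro!: derivative_eq_intros DERIV_chain2 [OF has_real_derivative_P [folded deriv_P]]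
        simp: algebra_simps)
  moreover have "?D = p * exp z * ((a - real n) * P n a b z + b * z * P n a b z + b * z * deriv (P n a b) z)"
    using assms unfolding powr_a_n powr_b z_def [symmetric] by (simp add: algebra_simps)
  moreover have "\<dots> = - (y powr (a - real (Suc n)) * exp (y powr b) * P (Suc n) a b (y powr b))"
    unfolding P_Suc p_def [symmetric] z_def [symmetric] by (simp add: algebra_simps)
  ultimately show ?thesis
    by simp
qed

lemma higher_deriv_powr_exp_powr:
  assumes "y > 0"
  shows "(deriv ^^ n) (\<lambda>y. y powr a * exp (y powr b)) y =
           (-1) ^ n * y powr (a - real n) * exp (y powr b) * P n a b (y powr b)"
  using assms
proof (induction n arbitrary: y)
  case 0
  then show ?case
    by (simp add: P_eq_sum P_coeff_def ffact_def)
next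
  case (Suc n)
  have "((\<lambda>y. (-1) ^ n * (y powr (a - real n) * exp (y powr b) * P n a b (y powr b)))
      has_real_derivative (-1) ^ Suc n * y powr (a - real (Suc n)) * exp (y powr b) * P (Suc n) a b (y powr b))
      (at y)"
    using DERIV_cmult [OF has_real_derivative_powr_exp_P [OF Suc.prems], of "(-1) ^ n"] by (simp add: mult_ac)
  then have "((deriv ^^ n) (\<lambda>y. y powr a * exp (y powr b)) has_real_derivative
      (-1) ^ Suc n * y powr (a - real (Suc n)) * exp (y powr b) * P (Suc n) a b (y powr b)) (at y)"
    by (rule has_field_derivative_transform_within_open [where S = "{0<..}"])
      (use Suc in \<open>auto simp: mult.assoc\<close>)
  then show ?case
    by (simp add: DERIV_imp_deriv)
qed

lemma P_reflect: "P n (real n - 1 - a) (- b) z = (-1) ^ n * P n a b z"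
  by (simp add: P_eq_sum P_coeff_def fwd_diff_ffact_reflect sum_distrib_left mult_ac)

theorem theorem1:
  fixes \<alpha> \<beta> x :: real and n :: nat
  assumes "\<beta> \<noteq> 0" and "x > 0"
  shows "P n \<alpha> \<beta> (x powr \<beta>) =
           (-1) ^ n * x powr (real n - \<alpha>) * exp (- (x powr \<beta>)) *
           (deriv ^^ n) (\<lambda>y. y powr \<alpha> * exp (y powr \<beta>)) x \<and>
         P n \<alpha> \<beta> (x powr (- \<beta>)) =
           x powr (\<alpha> + 1) * exp (- (x powr (- \<beta>))) *
           (deriv ^^ n) (\<lambda>y. y powr (real n - 1 - \<alpha>) * exp (y powr (- \<beta>))) x"
proof -
  have "x powr (\<alpha> - real n) = inverse (x powr (real n - \<alpha>))"
    and "x powr (real n - 1 - \<alpha> - real n) = inverse (x powr (\<alpha> + 1))"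
    by (simp_all add: powr_minus [symmetric] algebra_simps)
  moreover have "(-1::real) ^ n * (-1) ^ n = 1"
    by (simp add: power_mult_distrib [symmetric])
  ultimately show ?thesis
    unfolding higher_deriv_powr_exp_powr [OF assms(2)] P_reflect
    using assms(2) by (simp add: exp_minus field_simps)
qed

end
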